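(* Let $r$ be a tensor rank function. Then for every $\mathscr X\in\mathcal T$, $r(\mathscr X)=0$ if and only if $\mathscr X=\mathbf 0$.
   Context: $\mathcal T$ is the collection of all real tensors. A rank-one tensor is one of the form $x_{i_1\cdots i_N}=a^{(1)}_{i_1}\cdots a^{(N)}_{i_N}$ with all $\mathbf a^{(n)}$ nonzero vectors. $\mathscr I_{M,N}$ is the order-$N$ tensor of size $M\times\cdots\times M$ with $1$ in positions $(i,\dots,i)$ and $0$ elsewhere. The mode-$n$ product of $\mathscr X\in\mathbb R^{I_1\times\cdots\times I_N}$ with $\mathbf A\in\mathbb R^{J\times I_n}$ is $\mathscr X\times_n\mathbf A$ with entries $\sum_{i_n=1}^{I_n}x_{i_1\cdots i_N}a_{j i_n}$ at position $(i_1,\dots,i_{n-1},j,i_{n+1},\dots,i_N)$. A tensor rank function is a function $r:\mathcal T\to\mathbb N\cup\{0\}$ such that: (TR1) $r(\mathscr X)=1$ iff $\mathscr X$ is rank-one; (TR2) $r(\mathscr I_{M,N})=M$ whenever $N\ge2$; (TR3) for a matrix $\mathscr X\in\mathbb R^{I_1\times I_2}$, $r(\mathscr X)$ is its matrix rank; (TR4) if $\mathscr X\in\mathbb R^{I_1\times\cdots\times I_N}$ and $\mathscr X'$ is the corresponding tensor in $\mathbb R^{I_1\times\cdots\times I_N\times1}$, then $r(\mathscr X)=r(\mathscr X')$; (TR5) for $\pi\in S_N$, the tensor $\mathscr Y$ with $y_{i_1\cdots i_N}=x_{i_{\pi(1)}\cdots i_{\pi(N)}}$ satisfies $r(\mathscr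 Y)=r(\mathscr X)$; (TR6) $r(\mathscr X\times_n\mathbf A)\le r(\mathscr X)$ for all $\mathscr X\in\mathbb R^{I_1\times\cdots\times I_N}$, $n$, and $\mathbf A\in\mathbb R^{J\times I_n}$. *)

theory Defs
  imports "HOL-Combinatorics.Permutations" "Jordan_Normal_Form.DL_Rank"
begin

text \<open>A real tensor of order N = length d and size d!0 x ... x d!(N-1) is represented
  by its size list d and its entry function x on 0-based multi-indices (nat lists).
  Entries outside the valid index range are required to be 0, so that the pair (d, x)
  determines the tensor uniquely.\<close>

definition valid_index :: "nat list \<Rightarrow> nat list \<Rightarrow> bool" where
  "valid_index d i \<longleftrightarrow> length i = length d \<and> (\<forall>k<length d. i ! k < d ! k)"

definition is_tensor :: "nat list \<Rightarrow> (nat list \<Rightarrow> real) \<Rightarrow> bool" where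
  "is_tensor d x \<longleftrightarrow> length d \<ge> 1 \<and> (\<forall>k<length d. d ! k \<ge> 1) \<and>
     (\<forall>i. \<not> valid_index d i \<longrightarrow> x i = 0)"

definition rank_one :: "nat list \<Rightarrow> (nat list \<Rightarrow> real) \<Rightarrow> bool" where
  "rank_one d x \<longleftrightarrow> (\<exists>a :: nat \<Rightarrow> nat \<Rightarrow> real.
      (\<forall>n<length d. \<exists>i<d ! n. a n i \<noteq> 0) \<and>
      (\<forall>i. valid_index d i \<longrightarrow> x i = (\<Prod>n<length d. a n (i ! n))))"

definition diag_tensor :: "nat \<Rightarrow> nat \<Rightarrow> nat list \<Rightarrow> real" where
  "diag_tensor M N i =
     (if valid_index (replicate N M) i \<and> (\<forall>k<N. i ! k = i ! 0) then 1 else 0)"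

definition matrix_rank_of :: "nat list \<Rightarrow> (nat list \<Rightarrow> real) \<Rightarrow> nat" where
  "matrix_rank_of d x = vec_space.rank (d ! 0) (mat (d ! 0) (d ! 1) (\<lambda>(i, j). x [i, j]))"

definition extend_tensor :: "nat list \<Rightarrow> (nat list \<Rightarrow> real) \<Rightarrow> nat list \<Rightarrow> real" where
  "extend_tensor d x i = (if valid_index (d @ [1]) i then x (butlast i) else 0)"

text \<open>Permuted tensor: y_{i_1..i_N} = x_{i_pi(1)..i_pi(N)}; its size list has
  entry pi(k) equal to d!k.\<close>
definition perm_dims :: "(nat \<Rightarrow> nat) \<Rightarrow> nat list \<Rightarrow> nat list" where
  "perm_dims p d = map (\<lambda>m. d ! inv_into {..<length d} p m) [0..<length d]"

definition perm_tensor :: "(nat \<Rightarrow> nat) \<Rightarrow> nat list \<Rightarrow> (nat list \<Rightarrow> real) \<Rightarrow> nat list \<Rightarrow> real" where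
  "perm_tensor p d x i =
     (if valid_index (perm_dims p d) i then x (map (\<lambda>k. i ! p k) [0..<length d]) else 0)"

definition mode_dims :: "nat list \<Rightarrow> nat \<Rightarrow> nat \<Rightarrow> nat list" where
  "mode_dims d n J = d[n := J]"

definition mode_prod :: "nat list \<Rightarrow> (nat list \<Rightarrow> real) \<Rightarrow> nat \<Rightarrow> nat \<Rightarrow> (nat \<Rightarrow> nat \<Rightarrow> real)
    \<Rightarrow> nat list \<Rightarrow> real" where
  "mode_prod d x n J A i =
     (if valid_index (d[n := J]) i then (\<Sum>k<d ! n. x (i[n := k]) * A (i ! n) k) else 0)"

definition tensor_rank_function :: "(nat list \<Rightarrow> (nat list \<Rightarrow> real) \<Rightarrow> nat) \<Rightarrow> bool" where
  "tensor_rank_function r \<longleftrightarrow>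
     (\<forall>d x. is_tensor d x \<longrightarrow> (r d x = 1 \<longleftrightarrow> rank_one d x)) \<and>
     (\<forall>M N. M \<ge> 1 \<longrightarrow> N \<ge> 2 \<longrightarrow> r (replicate N M) (diag_tensor M N) = M) \<and>
     (\<forall>d x. is_tensor d x \<longrightarrow> length d = 2 \<longrightarrow> r d x = matrix_rank_of d x) \<and>
     (\<forall>d x. is_tensor d x \<longrightarrow> r (d @ [1]) (extend_tensor d x) = r d x) \<and>
     (\<forall>d x p. is_tensor d x \<longrightarrow> p permutes {..<length d} \<longrightarrow>
        r (perm_dims p d) (perm_tensor p d x) = r d x) \<and>
     (\<forall>d x n J A. is_tensor d x \<longrightarrow> n < length d \<longrightarrow> J \<ge> 1 \<longrightarrow>
        r (mode_dims d n J) (mode_prod d x n J A) \<le> r d x)"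

end

theory Submission
  imports Defs
begin

text \<open>The zero tensor is the mode-n product of the all-ones tensor, which is rank-one, with
  the zero matrix, so its rank is at most 1; it is not 1 because the zero tensor is not
  rank-one. Conversely, if x c \<noteq> 0, multiplying x mode by mode with the unit rows
  that select the coordinates of c collapses it to the 1 x ... x 1 tensor with entry x c,
  which is rank-one; as mode products do not increase the rank, r x \<ge> 1.\<close>

definition ones_tensor :: "nat list \<Rightarrow> nat list \<Rightarrow> real" where
  "ones_tensor d i = (if valid_index d i then 1 else 0)"

definition unit_row :: "nat \<Rightarrow> nat \<Rightarrow> nat \<Rightarrow> real" where
  "unit_row c j k = (if k = c then 1 else 0)"

text \<open>Fixing the first m indices of x to those of c; these modes are kept, with size 1.\<close>

definition prefix_slice_dims :: "nat list \<Rightarrow> nat \<Rightarrow> nat list" where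
  "prefix_slice_dims d m = map (\<lambda>k. if k < m then 1 else d ! k) [0..<length d]"

definition prefix_slice ::
    "nat list \<Rightarrow> (nat list \<Rightarrow> real) \<Rightarrow> nat list \<Rightarrow> nat \<Rightarrow> nat list \<Rightarrow> real" where
  "prefix_slice d x c m i =
    (if valid_index (prefix_slice_dims d m) i
     then x (map (\<lambda>k. if k < m then c ! k else i ! k) [0..<length d]) else 0)"

lemma not_rank_one_zero: "\<not> rank_one d (\<lambda>_. 0)"
proof
  assume "rank_one d (\<lambda>_. 0)"
  then obtain a where nonzero: "\<forall>n<length d. \<exists>i<d ! n. a n i \<noteq> 0"
    and prod: "\<forall>i. valid_index d i \<longrightarrow> (0::real) = (\<Prod>n<length d. a n (i ! n))"
    unfolding rank_one_def by blast
  obtain f where f: "\<And>n. n < length d \<Longrightarrow> f n < d ! n \<and> a n (f n) \<noteq> 0"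
    using nonzero by metis
  define i where "i = map f [0..<length d]"
  have "valid_index d i"
    unfolding valid_index_def i_def using f by auto
  moreover have "(\<Prod>n<length d. a n (i ! n)) \<noteq> 0"
    using f by (simp add: i_def)
  ultimately show False
    using prod by simp
qed

lemma is_tensor_ones_tensor:
  assumes "is_tensor d x"
  shows "is_tensor d (ones_tensor d)"
  using assms unfolding is_tensor_def ones_tensor_def by auto

lemma rank_one_ones_tensor:
  assumes "\<And>k. k < length d \<Longrightarrow> d ! k \<ge> 1"
  shows "rank_one d (ones_tensor d)"
  unfolding rank_one_def ones_tensor_def
  by (rule exI[of _ "\<lambda>_ _. 1"]) (use assms in \<open>auto simp: Suc_le_eq\<close>)

lemma mode_prod_zero_matrix: "mode_prod d x n J (\<lambda>_ _. 0) = (\<lambda>_. 0)"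
  unfolding mode_prod_def by auto

lemma valid_index_list_update:
  assumes "valid_index (d[n := J]) i" and "c < d ! n"
  shows "valid_index d (i[n := c])"
  using assms unfolding valid_index_def
  by (metis length_list_update nth_list_update nth_list_update_neq)

lemma mode_prod_unit_row:
  assumes "c < d ! n"
  shows "mode_prod d x n 1 (unit_row c) i =
    (if valid_index (d[n := 1]) i then x (i[n := c]) else 0)"
  using assms unfolding mode_prod_def unit_row_def
  by (simp add: if_distrib cong: if_cong)

lemma length_prefix_slice_dims [simp]: "length (prefix_slice_dims d m) = length d"
  by (simp add: prefix_slice_dims_def)

lemma prefix_slice_0:
  assumes "is_tensor d x"
  shows "prefix_slice_dims d 0 = d" and "prefix_slice d x c 0 = x"
proof -
  show dims: "prefix_slice_dims d 0 = d"
    unfolding prefix_slice_dims_def by (simp add: map_nth)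
  show "prefix_slice d x c 0 = x"
  proof
    fix i
    show "prefix_slice d x c 0 i = x i"
    proof (cases "valid_index d i")
      case True
      then have "map (\<lambda>k. i ! k) [0..<length d] = i"
        unfolding valid_index_def by (metis map_nth)
      with True show ?thesis
        unfolding prefix_slice_def dims by simp
    next
      case False
      with assms show ?thesis
        unfolding prefix_slice_def dims is_tensor_def by simp
    qed
  qed
qed

lemma is_tensor_prefix_slice:
  assumes "is_tensor d x"
  shows "is_tensor (prefix_slice_dims d m) (prefix_slice d x c m)"
  using assms unfolding is_tensor_def prefix_slice_def prefix_slice_dims_def by auto

lemma prefix_slice_Suc:
  assumes "valid_index d c" and "m < length d"
  shows "mode_dims (prefix_slice_dims d m) m 1 = prefix_slice_dims d (Suc m)"
    and "mode_prod (prefix_slice_dims d m) (prefix_slice d x c m) m 1 (unit_row (c ! m))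
      = prefix_slice d x c (Suc m)"
proof -
  show dims: "mode_dims (prefix_slice_dims d m) m 1 = prefix_slice_dims d (Suc m)"
    unfolding mode_dims_def prefix_slice_dims_def
    by (rule nth_equalityI) (auto simp: nth_list_update less_Suc_eq)
  have cm: "c ! m < prefix_slice_dims d m ! m"
    using assms unfolding valid_index_def prefix_slice_dims_def by simp
  show "mode_prod (prefix_slice_dims d m) (prefix_slice d x c m) m 1 (unit_row (c ! m))
      = prefix_slice d x c (Suc m)"
  proof
    fix i
    show "mode_prod (prefix_slice_dims d m) (prefix_slice d x c m) m 1 (unit_row (c ! m)) i
      = prefix_slice d x c (Suc m) i"
    proof (cases "valid_index (prefix_slice_dims d (Suc m)) i")
      case True
      then have valid: "valid_index (prefix_slice_dims d m) (i[m := c ! m])"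
        using valid_index_list_update[OF _ cm, of 1 i] dims unfolding mode_dims_def
        by (simp add: True)
      have index: "map (\<lambda>k. if k < m then c ! k else i[m := c ! m] ! k) [0..<length d]
          = map (\<lambda>k. if k < Suc m then c ! k else i ! k) [0..<length d]"
        using True assms(2) unfolding valid_index_def prefix_slice_dims_def
        by (auto simp: nth_list_update less_Suc_eq)
      show ?thesis
        using True dims
        unfolding mode_prod_unit_row[OF cm] mode_dims_def prefix_slice_def
        by (simp only: valid index if_True)
    next
      case False
      then show ?thesis
        using dims unfolding mode_prod_def mode_dims_def prefix_slice_def by simp
    qed
  qed
qed

lemma rank_one_full_prefix_slice:
  assumes "d \<noteq> []" and "valid_index d c" and "x c \<noteq> 0"
  shows "rank_one (prefix_slice_dims d (length d)) (prefix_slice d x c (length d))"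
  unfolding rank_one_def
proof (intro exI[of _ "\<lambda>n _. if n = 0 then x c else 1"] conjI allI impI)
  let ?N = "length d"
  show "\<exists>i<prefix_slice_dims d ?N ! n. (if n = 0 then x c else 1) \<noteq> 0"
    if "n < length (prefix_slice_dims d ?N)" for n
    using that assms(3) by (auto simp: prefix_slice_dims_def)
  show "prefix_slice d x c ?N i =
      (\<Prod>n<length (prefix_slice_dims d ?N). if n = 0 then x c else 1)"
    if "valid_index (prefix_slice_dims d ?N) i" for i
  proof -
    have "map (\<lambda>k. if k < ?N then c ! k else i ! k) [0..<?N] = c"
      using assms(2) unfolding valid_index_def by (auto intro!: nth_equalityI)
    then show ?thesis
      using that assms(1) unfolding prefix_slice_def by (simp add: prefix_slice_dims_def)
  qed
qed

lemma tensor_rank_function_eq_1_iff: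
  assumes "tensor_rank_function r" and "is_tensor d x"
  shows "r d x = 1 \<longleftrightarrow> rank_one d x"
  using assms unfolding tensor_rank_function_def by blast

lemma tensor_rank_function_mode_prod_le:
  assumes "tensor_rank_function r" and "is_tensor d x" and "n < length d" and "J \<ge> 1"
  shows "r (mode_dims d n J) (mode_prod d x n J A) \<le> r d x"
  using assms unfolding tensor_rank_function_def by blast

lemma tensor_rank_function_zero:
  assumes "tensor_rank_function r" and "is_tensor d x"
  shows "r d (\<lambda>_. 0) = 0"
proof -
  have dims: "d \<noteq> []" "\<And>k. k < length d \<Longrightarrow> d ! k \<ge> 1"
    using assms(2) unfolding is_tensor_def by auto
  have zero: "is_tensor d (\<lambda>_. 0)"
    using assms(2) unfolding is_tensor_def by simp
  have ones: "is_tensor d (ones_tensor d)"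
    using assms(2) by (rule is_tensor_ones_tensor)
  have "r d (\<lambda>_. 0) =
      r (mode_dims d 0 (d ! 0)) (mode_prod d (ones_tensor d) 0 (d ! 0) (\<lambda>_ _. 0))"
    by (simp add: mode_dims_def mode_prod_zero_matrix)
  also have "\<dots> \<le> r d (ones_tensor d)"
    using tensor_rank_function_mode_prod_le[OF assms(1) ones] dims by simp
  also have "\<dots> = 1"
    using tensor_rank_function_eq_1_iff[OF assms(1) ones] rank_one_ones_tensor dims(2) by blast
  finally have "r d (\<lambda>_. 0) \<le> 1" .
  moreover have "r d (\<lambda>_. 0) \<noteq> 1"
    using tensor_rank_function_eq_1_iff[OF assms(1) zero] not_rank_one_zero by blast
  ultimately show ?thesis
    by simp
qed

lemma tensor_rank_function_prefix_slice_le: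
  assumes "tensor_rank_function r" and "is_tensor d x" and "valid_index d c"
    and "m \<le> length d"
  shows "r (prefix_slice_dims d m) (prefix_slice d x c m) \<le> r d x"
  using assms(4)
proof (induction m)
  case 0
  then show ?case
    using prefix_slice_0[OF assms(2)] by simp
next
  case (Suc m)
  then have "m < length d"
    by simp
  then have "r (prefix_slice_dims d (Suc m)) (prefix_slice d x c (Suc m))
      \<le> r (prefix_slice_dims d m) (prefix_slice d x c m)"
    using tensor_rank_function_mode_prod_le[OF assms(1),
        OF is_tensor_prefix_slice[OF assms(2), of m c], of m 1 "unit_row (c ! m)"]
    unfolding prefix_slice_Suc[OF assms(3) \<open>m < length d\<close>] by simp
  with Suc show ?case
    by simp
qed

lemma tensor_rank_function_pos:
  assumes "tensor_rank_function r" and "is_tensor d x" and "x c \<noteq> 0"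
  shows "r d x \<ge> 1"
proof -
  have c: "valid_index d c"
    using assms(2,3) unfolding is_tensor_def by blast
  have "d \<noteq> []"
    using assms(2) unfolding is_tensor_def by auto
  then have "r (prefix_slice_dims d (length d)) (prefix_slice d x c (length d)) = 1"
    using tensor_rank_function_eq_1_iff[OF assms(1) is_tensor_prefix_slice[OF assms(2)]]
      rank_one_full_prefix_slice c assms(3) by blast
  then show ?thesis
    using tensor_rank_function_prefix_slice_le[OF assms(1,2) c, of "length d"] by simp
qed

theorem proposition4p3:
  fixes r :: "nat list \<Rightarrow> (nat list \<Rightarrow> real) \<Rightarrow> nat"
    and d :: "nat list" and x :: "nat list \<Rightarrow> real"
  assumes "tensor_rank_function r"
    and "is_tensor d x"
  shows "r d x = 0 \<longleftrightarrow> x = (\<lambda>_. 0)"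
proof
  show "x = (\<lambda>_. 0)" if "r d x = 0"
    using tensor_rank_function_pos[OF assms] that by fastforce
  show "r d x = 0" if "x = (\<lambda>_. 0)"
    using tensor_rank_function_zero[OF assms] that by simp
qed

end
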